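(* Let $A$ be (the matrix of) a te-lace with at least three rows and let $p=(i,j)$ be a pivot of $A$. Then the rows of $A/\!\!/p$ form a te-lace.
   Context: A set of vectors is identified with the matrix whose rows are these vectors. A matrix is totally equimodular if every set of linearly independent rows forms a matrix of full row rank whose nonzero maximal minors all have the same absolute value, and totally unimodular if all its square submatrices have determinant in $\{0,\pm1\}$. A linearly independent set of $\{0,\pm1\}$-vectors is a te-set if its matrix is totally equimodular, a tu-set if its matrix is totally unimodular, and a te-lace if it is a te-set, not a tu-set, and all its proper subsets are tu-sets. A pivot of $A$ is a position $p=(i,j)$ with $A_i^j\neq0$; $A/p$ is obtained by dividing row $i$ by $A_i^j$ and adding multiples of it to the other rows so that column $j$ becomes the $i$-th unit vector; the trim $A/\!\!/p$ is obtained from $A/p$ by deleting row $i$ and column $j$. *)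

theory Defs
  imports "Jordan_Normal_Form.Determinant" "Jordan_Normal_Form.DL_Submatrix"
begin

text \<open>Matrices are real matrices of the Jordan_Normal_Form library; a finite set of
  vectors is identified with the matrix whose rows are these vectors.\<close>

definition zero_pm_one :: "real mat \<Rightarrow> bool" where
  "zero_pm_one A \<longleftrightarrow> (\<forall>i<dim_row A. \<forall>j<dim_col A. A $$ (i,j) \<in> {-1, 0, 1})"

definition lin_indep_rows :: "real mat \<Rightarrow> bool" where
  "lin_indep_rows A \<longleftrightarrow>
     (\<forall>c :: nat \<Rightarrow> real. (\<forall>j<dim_col A. (\<Sum>i<dim_row A. c i * A $$ (i,j)) = 0)
        \<longrightarrow> (\<forall>i<dim_row A. c i = 0))"

definition rows_of :: "real mat \<Rightarrow> nat set \<Rightarrow> real mat" where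
  "rows_of A R = submatrix A R {0..<dim_col A}"

definition totally_equimodular :: "real mat \<Rightarrow> bool" where
  "totally_equimodular A \<longleftrightarrow>
     (\<forall>R \<subseteq> {0..<dim_row A}. lin_indep_rows (rows_of A R) \<longrightarrow>
        (\<forall>J1 J2. J1 \<subseteq> {0..<dim_col A} \<and> J2 \<subseteq> {0..<dim_col A} \<and>
                 card J1 = card R \<and> card J2 = card R \<and>
                 det (submatrix A R J1) \<noteq> 0 \<and> det (submatrix A R J2) \<noteq> 0 \<longrightarrow>
                 \<bar>det (submatrix A R J1)\<bar> = \<bar>det (submatrix A R J2)\<bar>))"

definition totally_unimodular :: "real mat \<Rightarrow> bool" where
  "totally_unimodular A \<longleftrightarrow>
     (\<forall>I J. I \<subseteq> {0..<dim_row A} \<and> J \<subseteq> {0..<dim_col A} \<and> card I = card J \<longrightarrow>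
        det (submatrix A I J) \<in> {-1, 0, 1})"

definition te_set :: "real mat \<Rightarrow> bool" where
  "te_set A \<longleftrightarrow> zero_pm_one A \<and> lin_indep_rows A \<and> totally_equimodular A"

definition tu_set :: "real mat \<Rightarrow> bool" where
  "tu_set A \<longleftrightarrow> zero_pm_one A \<and> lin_indep_rows A \<and> totally_unimodular A"

definition te_lace :: "real mat \<Rightarrow> bool" where
  "te_lace A \<longleftrightarrow> te_set A \<and> \<not> tu_set A \<and>
     (\<forall>R. R \<subset> {0..<dim_row A} \<longrightarrow> tu_set (rows_of A R))"

definition pivot_mat :: "real mat \<Rightarrow> nat \<Rightarrow> nat \<Rightarrow> real mat" where
  "pivot_mat A i j = mat (dim_row A) (dim_col A)
     (\<lambda>(r,c). if r = i then A $$ (i,c) / A $$ (i,j)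
             else A $$ (r,c) - (A $$ (r,j) / A $$ (i,j)) * A $$ (i,c))"

text \<open>The trim A//p: delete row i and column j of A/p.\<close>
definition trim_mat :: "real mat \<Rightarrow> nat \<Rightarrow> nat \<Rightarrow> real mat" where
  "trim_mat A i j = mat (dim_row A - 1) (dim_col A - 1)
     (\<lambda>(r,c). pivot_mat A i j $$ (if r < i then r else Suc r, if c < j then c else Suc c))"

end

theory Submission
  imports Defs
begin

text \<open>Let a be the pivot entry; a = 1 or a = -1, as A is a {0, 1, -1}-matrix. Expanding along
  the pivot column of A/p, which is a unit vector, shows that the minor of the trim A//p on rows R
  and columns K is the minor of A on the rows i, R' and columns j, K' divided by a, where R' and K'
  are the rows and columns of A that R and K come from. Hence linear independence, total
  equimodularity and total unimodularity of sets of rows pass from A to A//p; in particular every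
  proper set of rows of A//p, coming from a proper set of rows of A, is a tu-set, and since A//p has
  at least two rows its entries are 0, 1 or -1.

  It remains to see that A//p is not totally unimodular. All proper sets of rows of A are
  tu-sets but A is not, so some maximal minor of A is not 0, 1 or -1. Cramer's rule lets us
  exchange one of its columns for column j keeping it nonzero, and total equimodularity keeps
  its absolute value; the resulting minor through the pivot is, up to sign, a maximal minor of A//p.\<close>

definition submatrix_list :: "'a mat \<Rightarrow> nat list \<Rightarrow> nat list \<Rightarrow> 'a mat" where
  "submatrix_list A rs cs = mat (length rs) (length cs) (\<lambda>(a,b). A $$ (rs ! a, cs ! b))"

lemma dim_submatrix_list [simp]:
  "dim_row (submatrix_list A rs cs) = length rs"
  "dim_col (submatrix_list A rs cs) = length cs"
  by (simp_all add: submatrix_list_def)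

lemma submatrix_list_index [simp]:
  "a < length rs \<Longrightarrow> b < length cs \<Longrightarrow> submatrix_list A rs cs $$ (a,b) = A $$ (rs ! a, cs ! b)"
  by (simp add: submatrix_list_def)

lemma submatrix_list_submatrix_list:
  assumes "set rs' \<subseteq> {..<length rs}" and "set cs' \<subseteq> {..<length cs}"
  shows "submatrix_list (submatrix_list A rs cs) rs' cs' = submatrix_list A (map ((!) rs) rs') (map ((!) cs) cs')"
  using assms by (intro eq_matI) (auto simp: subset_iff)

lemma sorted_list_of_set_eq_map_pick:
  assumes "finite I"
  shows "sorted_list_of_set I = map (pick I) [0..<card I]"
proof -
  have "sorted_wrt (<) (map (pick I) [0..<card I])"
    by (auto simp: sorted_wrt_iff_nth_less intro!: pick_mono_le)
  moreover have "x \<in> pick I ` {..<card I}" if x: "x \<in> I" for x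
  proof
    have "{a \<in> I. a < x} \<subset> I" using x by auto
    then show "card {a \<in> I. a < x} \<in> {..<card I}" using assms psubset_card_mono by auto
  qed (use pick_card_in_set[OF x] in simp)
  then have "set (map (pick I) [0..<card I]) = I"
    using pick_in_set_le by (auto simp: atLeast0LessThan)
  ultimately show ?thesis
    using sorted_list_of_set_unique[OF assms, of "map (pick I) [0..<card I]"] by auto
qed

lemma submatrix_eq_submatrix_list:
  assumes "I \<subseteq> {0..<dim_row A}" and "J \<subseteq> {0..<dim_col A}"
  shows "submatrix A I J = submatrix_list A (sorted_list_of_set I) (sorted_list_of_set J)"
proof -
  have IJ: "{i. i < dim_row A \<and> i \<in> I} = I" "{j. j < dim_col A \<and> j \<in> J} = J"
    using assms by auto
  have "finite I" "finite J" using assms finite_subset by blast+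
  then have "sorted_list_of_set I = map (pick I) [0..<card I]"
    "sorted_list_of_set J = map (pick J) [0..<card J]"
    by (simp_all add: sorted_list_of_set_eq_map_pick)
  then show ?thesis
    by (intro eq_matI) (simp_all add: submatrix_index dim_submatrix IJ)
qed

lemma rows_of_eq_submatrix_list:
  "R \<subseteq> {0..<dim_row A} \<Longrightarrow> rows_of A R = submatrix_list A (sorted_list_of_set R) [0..<dim_col A]"
  by (simp add: rows_of_def submatrix_eq_submatrix_list)

lemma abs_det_permute_row_list:
  fixes f :: "nat \<Rightarrow> nat \<Rightarrow> 'a :: linordered_idom"
  assumes "distinct rs" "distinct rs'" "set rs = set rs'" "length rs = n"
  shows "\<bar>det (mat n n (\<lambda>(a,b). f (rs' ! a) b))\<bar> = \<bar>det (mat n n (\<lambda>(a,b). f (rs ! a) b))\<bar>"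
proof -
  obtain p where p: "p permutes {..<length rs}" "permute_list p rs = rs'"
    using mset_eq_permutation[of rs' rs] assms(1-3) by (metis set_eq_iff_mset_eq_distinct)
  have "p a < n" if "a < n" for a
    using permutes_in_image[OF p(1)] that assms(4) by simp
  then have "mat n n (\<lambda>(a,b). f (rs' ! a) b) = mat n n (\<lambda>(a,b). mat n n (\<lambda>(a,b). f (rs ! a) b) $$ (p a, b))"
    using p assms(4) by (intro eq_matI) (auto simp: permute_list_nth)
  also have "det \<dots> = signof p * det (mat n n (\<lambda>(a,b). f (rs ! a) b))"
    using p(1) assms(4) by (intro det_permute_rows) (auto simp: atLeast0LessThan)
  finally show ?thesis by (cases p rule: sign_cases) (simp_all add: abs_mult)
qed

lemma abs_det_submatrix_list_permute:
  fixes A :: "'a :: linordered_idom mat"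
  assumes "distinct rs" "distinct rs'" "set rs = set rs'"
    and "distinct cs" "distinct cs'" "set cs = set cs'"
    and "length cs = length rs"
  shows "\<bar>det (submatrix_list A rs' cs')\<bar> = \<bar>det (submatrix_list A rs cs)\<bar>"
proof -
  let ?n = "length rs"
  have len: "length rs' = ?n" "length cs' = ?n"
    using assms distinct_card by metis+
  have "\<bar>det (submatrix_list A rs' cs')\<bar> = \<bar>det (transpose_mat (submatrix_list A rs' cs'))\<bar>"
    using len by (subst det_transpose) auto
  also have "transpose_mat (submatrix_list A rs' cs') = mat ?n ?n (\<lambda>(a,b). A $$ (rs' ! b, cs' ! a))"
    using len by (intro eq_matI) auto
  also have "\<bar>det \<dots>\<bar> = \<bar>det (mat ?n ?n (\<lambda>(a,b). A $$ (rs' ! b, cs ! a)))\<bar>"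
    using abs_det_permute_row_list[where f = "\<lambda>c b. A $$ (rs' ! b, c)" and rs = cs and rs' = cs'] assms by simp
  also have "mat ?n ?n (\<lambda>(a,b). A $$ (rs' ! b, cs ! a)) = transpose_mat (submatrix_list A rs' cs)"
    using len assms(7) by (intro eq_matI) auto
  also have "\<bar>det \<dots>\<bar> = \<bar>det (mat ?n ?n (\<lambda>(a,b). A $$ (rs' ! a, cs ! b)))\<bar>"
    using len assms(7) by (subst det_transpose) (auto simp: submatrix_list_def)
  also have "\<dots> = \<bar>det (submatrix_list A rs cs)\<bar>"
    using abs_det_permute_row_list[where f = "\<lambda>r b. A $$ (r, cs ! b)" and rs = rs and rs' = rs'] assms
    by (simp add: submatrix_list_def)
  finally show ?thesis .
qed

lemma abs_det_submatrix_eq_submatrix_list: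
  fixes A :: "'a :: linordered_idom mat"
  assumes "distinct rs" "set rs \<subseteq> {0..<dim_row A}" "distinct cs" "set cs \<subseteq> {0..<dim_col A}"
    and "length cs = length rs"
  shows "\<bar>det (submatrix A (set rs) (set cs))\<bar> = \<bar>det (submatrix_list A rs cs)\<bar>"
proof -
  have "submatrix A (set rs) (set cs) =
      submatrix_list A (sorted_list_of_set (set rs)) (sorted_list_of_set (set cs))"
    using assms by (intro submatrix_eq_submatrix_list)
  also have "\<bar>det \<dots>\<bar> = \<bar>det (submatrix_list A rs cs)\<bar>"
    using assms by (intro abs_det_submatrix_list_permute) auto
  finally show ?thesis .
qed

lemma det_submatrix_list_totally_unimodular:
  fixes M :: "real mat"
  assumes "totally_unimodular M"
    and "distinct rs" "set rs \<subseteq> {0..<dim_row M}" "distinct cs" "set cs \<subseteq> {0..<dim_col M}"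
    and "length cs = length rs"
  shows "det (submatrix_list M rs cs) \<in> {-1, 0, 1}"
proof -
  have "card (set rs) = card (set cs)" using assms by (simp add: distinct_card)
  then have "det (submatrix M (set rs) (set cs)) \<in> {-1, 0, 1}"
    using assms unfolding totally_unimodular_def by blast
  then show ?thesis using abs_det_submatrix_eq_submatrix_list[OF assms(2-6)] by (auto simp: abs_if split: if_splits)
qed

lemma submatrix_list_rows_of:
  assumes R: "R \<subseteq> {0..<dim_row A}" and rs: "distinct rs" "set rs \<subseteq> R"
    and cs: "set cs \<subseteq> {0..<dim_col A}"
  obtains rs' where "length rs' = length rs" "distinct rs'" "set rs' \<subseteq> {0..<card R}"
    "submatrix_list (rows_of A R) rs' cs = submatrix_list A rs cs"
proof
  define P where "P = sorted_list_of_set R"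
  define pos where "pos = the_inv_into {..<card R} ((!) P)"
  have "finite R" using R finite_subset by blast
  then have P: "distinct P" "set P = R" "length P = card R" by (simp_all add: P_def)
  then have bij: "bij_betw ((!) P) {..<card R} R" by (intro bij_betw_nth) auto
  have pos: "P ! pos x = x" "pos x < card R" if "x \<in> R" for x
    using bij_betw_apply[OF bij_betw_the_inv_into[OF bij] that]
      f_the_inv_into_f_bij_betw[OF bij, of x] that by (simp_all add: pos_def)
  show "length (map pos rs) = length rs" by simp
  show "distinct (map pos rs)"
    using rs bij_betw_the_inv_into[OF bij] by (auto simp: distinct_map pos_def bij_betw_def intro: inj_on_subset)
  show "set (map pos rs) \<subseteq> {0..<card R}" using rs pos by auto
  have "map ((!) P) (map pos rs) = rs" "map ((!) [0..<dim_col A]) cs = cs"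
    using rs cs pos by (auto intro!: map_idI)
  moreover have "submatrix_list (rows_of A R) (map pos rs) cs =
      submatrix_list A (map ((!) P) (map pos rs)) (map ((!) [0..<dim_col A]) cs)"
    unfolding rows_of_eq_submatrix_list[OF R] P_def[symmetric]
    using rs cs pos P by (intro submatrix_list_submatrix_list) auto
  ultimately show "submatrix_list (rows_of A R) (map pos rs) cs = submatrix_list A rs cs"
    by simp
qed

lemma det_submatrix_list_rows_of_totally_unimodular:
  fixes A :: "real mat"
  assumes "totally_unimodular (rows_of A R)" "R \<subseteq> {0..<dim_row A}"
    and "distinct rs" "set rs \<subseteq> R" "distinct cs" "set cs \<subseteq> {0..<dim_col A}"
    and "length cs = length rs"
  shows "det (submatrix_list A rs cs) \<in> {-1, 0, 1}"
proof -
  obtain rs' where rs': "length rs' = length rs" "distinct rs'" "set rs' \<subseteq> {0..<card R}"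
    "submatrix_list (rows_of A R) rs' cs = submatrix_list A rs cs"
    by (rule submatrix_list_rows_of[OF assms(2-4,6)])
  have "dim_row (rows_of A R) = card R" "dim_col (rows_of A R) = dim_col A"
    using assms(2) by (simp_all add: rows_of_eq_submatrix_list)
  then have "det (submatrix_list (rows_of A R) rs' cs) \<in> {-1, 0, 1}"
    using rs' assms(5-7) by (intro det_submatrix_list_totally_unimodular[OF assms(1) rs'(2)]) auto
  then show ?thesis using rs'(4) by simp
qed

lemma lin_indep_rows_rows_of:
  assumes li: "lin_indep_rows A" and R: "R \<subseteq> {0..<dim_row A}"
  shows "lin_indep_rows (rows_of A R)"
  unfolding lin_indep_rows_def
proof (rule allI, rule impI)
  define P where "P = sorted_list_of_set R"
  define pos where "pos = the_inv_into {..<card R} ((!) P)"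
  have "finite R" using R finite_subset by blast
  then have P: "distinct P" "set P = R" "length P = card R" by (simp_all add: P_def)
  then have bij: "bij_betw ((!) P) {..<card R} R" by (intro bij_betw_nth) auto
  have rows: "rows_of A R = submatrix_list A P [0..<dim_col A]"
    using R by (simp add: rows_of_eq_submatrix_list P_def)
  fix c :: "nat \<Rightarrow> real"
  assume comb: "\<forall>j<dim_col (rows_of A R). (\<Sum>i<dim_row (rows_of A R). c i * rows_of A R $$ (i, j)) = 0"
  define c' where "c' x = (if x \<in> R then c (pos x) else 0)" for x
  have c'_nth: "c' (P ! q) = c q" if "q < card R" for q
    using that bij by (simp add: c'_def pos_def the_inv_into_f_f bij_betw_def bij_betw_apply)
  have "(\<Sum>x<dim_row A. c' x * A $$ (x, j)) = 0" if j: "j < dim_col A" for j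
  proof -
    have "(\<Sum>x<dim_row A. c' x * A $$ (x, j)) = (\<Sum>x\<in>R. c' x * A $$ (x, j))"
      using R by (intro sum.mono_neutral_right) (auto simp: c'_def)
    also have "\<dots> = (\<Sum>q<card R. c' (P ! q) * A $$ (P ! q, j))"
      by (rule sum.reindex_bij_betw[OF bij, symmetric])
    also have "\<dots> = 0"
      using comb j P by (simp add: rows c'_nth)
    finally show ?thesis .
  qed
  then have "\<forall>x<dim_row A. c' x = 0" using li unfolding lin_indep_rows_def by blast
  moreover have "P ! q < dim_row A" if "q < card R" for q
    using R P nth_mem[of q P] that by auto
  ultimately show "\<forall>q<dim_row (rows_of A R). c q = 0"
    using c'_nth P by (simp add: rows)
qed

lemma abs_det_submatrix_list_totally_equimodular:
  fixes A :: "real mat"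
  assumes te: "totally_equimodular A" and li: "lin_indep_rows A"
    and rs: "distinct rs" "set rs \<subseteq> {0..<dim_row A}"
    and cs1: "distinct cs1" "set cs1 \<subseteq> {0..<dim_col A}" "length cs1 = length rs"
    and cs2: "distinct cs2" "set cs2 \<subseteq> {0..<dim_col A}" "length cs2 = length rs"
    and nonzero: "det (submatrix_list A rs cs1) \<noteq> 0" "det (submatrix_list A rs cs2) \<noteq> 0"
  shows "\<bar>det (submatrix_list A rs cs1)\<bar> = \<bar>det (submatrix_list A rs cs2)\<bar>"
proof -
  have eq1: "\<bar>det (submatrix A (set rs) (set cs1))\<bar> = \<bar>det (submatrix_list A rs cs1)\<bar>"
    and eq2: "\<bar>det (submatrix A (set rs) (set cs2))\<bar> = \<bar>det (submatrix_list A rs cs2)\<bar>"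
    using rs cs1 cs2 by (simp_all add: abs_det_submatrix_eq_submatrix_list)
  have "lin_indep_rows (rows_of A (set rs))" using lin_indep_rows_rows_of[OF li rs(2)] .
  moreover have "card (set cs1) = card (set rs)" "card (set cs2) = card (set rs)"
    using rs cs1 cs2 by (simp_all add: distinct_card)
  moreover have "det (submatrix A (set rs) (set cs1)) \<noteq> 0" "det (submatrix A (set rs) (set cs2)) \<noteq> 0"
    using eq1 eq2 nonzero by auto
  ultimately have "\<bar>det (submatrix A (set rs) (set cs1))\<bar> = \<bar>det (submatrix A (set rs) (set cs2))\<bar>"
    using te rs cs1 cs2 unfolding totally_equimodular_def by blast
  then show ?thesis using eq1 eq2 by simp
qed

lemma smult_one_mat_mult_vec:
  "(v :: 'a :: comm_ring_1 vec) \<in> carrier_vec n \<Longrightarrow> (c \<cdot>\<^sub>m 1\<^sub>m n) *\<^sub>v v = c \<cdot>\<^sub>v v"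
proof (intro eq_vecI)
  fix q assume v: "v \<in> carrier_vec n" and "q < dim_vec (c \<cdot>\<^sub>v v)"
  then have q: "q < n" by simp
  have "((c \<cdot>\<^sub>m 1\<^sub>m n) *\<^sub>v v) $ q = (\<Sum>r = 0..<n. c * (if r = q then 1 else 0) * v $ r)"
    using q v by (simp add: scalar_prod_def)
  also have "\<dots> = (\<Sum>r = 0..<n. if r = q then c * v $ r else 0)"
    by (rule sum.cong) auto
  finally show "((c \<cdot>\<^sub>m 1\<^sub>m n) *\<^sub>v v) $ q = (c \<cdot>\<^sub>v v) $ q"
    using q v by simp
qed simp

lemma exists_mult_mat_vec_eq:
  fixes M :: "'a :: field mat"
  assumes M: "M \<in> carrier_mat n n" and nonsingular: "det M \<noteq> 0" and b: "b \<in> carrier_vec n"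
  obtains x where "x \<in> carrier_vec n" "M *\<^sub>v x = b"
proof
  note adj = adj_mat(1,2)[OF M]
  show "(1 / det M) \<cdot>\<^sub>v (adj_mat M *\<^sub>v b) \<in> carrier_vec n" using adj b by simp
  have "M *\<^sub>v ((1 / det M) \<cdot>\<^sub>v (adj_mat M *\<^sub>v b)) = (1 / det M) \<cdot>\<^sub>v (M *\<^sub>v (adj_mat M *\<^sub>v b))"
    using M adj b by (intro mult_mat_vec) auto
  also have "M *\<^sub>v (adj_mat M *\<^sub>v b) = (M * adj_mat M) *\<^sub>v b"
    using M adj b by (intro assoc_mult_mat_vec[symmetric])
  also have "\<dots> = det M \<cdot>\<^sub>v b"
    unfolding adj(2) using b by (rule smult_one_mat_mult_vec)
  finally show "M *\<^sub>v ((1 / det M) \<cdot>\<^sub>v (adj_mat M *\<^sub>v b)) = b"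
    using nonsingular by (simp add: smult_smult_assoc)
qed

lemma exists_column_exchange_nonsingular:
  fixes A :: "'a :: field mat"
  assumes nonsingular: "det (submatrix_list A rs cs) \<noteq> 0" and len: "length cs = length rs"
    and q: "q < length rs" and nonzero: "A $$ (rs ! q, j) \<noteq> 0"
  shows "\<exists>t < length rs. det (submatrix_list A rs (cs[t := j])) \<noteq> 0"
proof (rule ccontr)
  assume singular: "\<not> ?thesis"
  define k where "k = length rs"
  define M where "M = submatrix_list A rs cs"
  define b where "b = vec k (\<lambda>r. A $$ (rs ! r, j))"
  have M: "M \<in> carrier_mat k k" unfolding M_def k_def using len by (intro carrier_matI) simp_all
  have "b \<in> carrier_vec k" "det M \<noteq> 0" using nonsingular by (simp_all add: b_def M_def)
  then obtain x where x: "x \<in> carrier_vec k" and Mx: "M *\<^sub>v x = b"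
    using exists_mult_mat_vec_eq[OF M] by metis
  \<comment> \<open>Cramer's rule: the coordinates of x are the exchanged minors divided by det M.\<close>
  have "x $ t = 0" if t: "t < k" for t
  proof -
    have "replace_col M (M *\<^sub>v x) t = submatrix_list A rs (cs[t := j])"
      unfolding Mx using len t
      by (intro eq_matI) (auto simp: replace_col_def M_def b_def k_def nth_list_update)
    then have "x $ t * det M = 0"
      using cramer_lemma_mat[OF M x t] singular t by (simp add: k_def)
    then show ?thesis using nonsingular by (simp add: M_def)
  qed
  then have "x = 0\<^sub>v k" using x by (intro eq_vecI) auto
  then have "b = M *\<^sub>v 0\<^sub>v k" using Mx by simp
  also have "\<dots> = 0\<^sub>v k" using M by (intro eq_vecI) (auto simp: scalar_prod_def)
  finally have "b $ q = 0" using q by (simp add: k_def)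
  then show False using q nonzero by (simp add: b_def k_def)
qed

lemma insert_index_less: "i < m \<Longrightarrow> r < m - 1 \<Longrightarrow> insert_index i r < m"
  unfolding insert_index_def by auto

lemma insert_index_list:
  assumes "distinct rs" "set rs \<subseteq> {0..<m - 1}" "i < m"
  shows "distinct (i # map (insert_index i) rs)" "set (i # map (insert_index i) rs) \<subseteq> {0..<m}"
  using assms insert_index_inj_on[of i] insert_index_less[of i m]
  by (auto simp: distinct_map inj_on_subset) (metis insert_index_exclude)

lemma sum_lessThan_insert_index:
  assumes "i < m"
  shows "(\<Sum>x<m. f x) = f i + (\<Sum>r<m - 1. f (insert_index i r))"
proof -
  have "{..<m} = insert i (insert_index i ` {..<m - 1})"
    using insert_index_image[of i "m - 1"] assms by (auto simp: atLeast0LessThan)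
  moreover have "i \<notin> insert_index i ` {..<m - 1}" by (metis imageE insert_index_exclude)
  ultimately show ?thesis
    using insert_index_inj_on[of i] by (simp add: sum.reindex)
qed

lemma pivot_mat_index:
  "r < dim_row A \<Longrightarrow> c < dim_col A \<Longrightarrow> pivot_mat A i j $$ (r, c) =
     (if r = i then A $$ (i, c) / A $$ (i, j) else A $$ (r, c) - (A $$ (r, j) / A $$ (i, j)) * A $$ (i, c))"
  by (simp add: pivot_mat_def)

lemma trim_mat_index:
  assumes "i < dim_row A" "r < dim_row A - 1" "c < dim_col A - 1"
  shows "trim_mat A i j $$ (r, c) = A $$ (insert_index i r, insert_index j c)
    - A $$ (insert_index i r, j) / A $$ (i, j) * A $$ (i, insert_index j c)"
  using assms insert_index_less[of i "dim_row A" r]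
  by (simp add: trim_mat_def insert_index_def pivot_mat_index)

lemma dim_trim_mat [simp]:
  "dim_row (trim_mat A i j) = dim_row A - 1" "dim_col (trim_mat A i j) = dim_col A - 1"
  by (simp_all add: trim_mat_def)

lemma det_submatrix_list_pivot_mat:
  fixes A :: "real mat"
  assumes i: "i < dim_row A" and rs: "set rs \<subseteq> {0..<dim_row A} - {i}"
    and cs: "set cs \<subseteq> {0..<dim_col A}" and len: "length cs = Suc (length rs)"
  shows "det (submatrix_list (pivot_mat A i j) (i # rs) cs) = det (submatrix_list A (i # rs) cs) / A $$ (i, j)"
proof -
  define k where "k = length rs"
  define R where "R = i # rs"
  define a where "a = A $$ (i, j)"
  define N where "N = submatrix_list (pivot_mat A i j) R cs"
  define M where "M = submatrix_list A R cs"
  have R: "R ! r < dim_row A" "r \<noteq> 0 \<Longrightarrow> R ! r \<noteq> i" if "r < Suc k" for r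
    using that i rs by (auto simp: R_def k_def nth_Cons' subset_iff)
  have N: "N \<in> carrier_mat (Suc k) (Suc k)" and M: "M \<in> carrier_mat (Suc k) (Suc k)"
    unfolding N_def M_def R_def k_def using len by auto
  \<comment> \<open>Pivoting is left multiplication by a lower triangular matrix with diagonal 1/a, 1, ..., 1.\<close>
  define E where "E = mat (Suc k) (Suc k) (\<lambda>(x, y).
     (if y = 0 then (if x = 0 then 1 / a else - A $$ (R ! x, j) / a) else 0) + (if y = x \<and> x \<noteq> 0 then 1 else 0))"
  have E: "E \<in> carrier_mat (Suc k) (Suc k)" by (simp add: E_def)
  have "N = E * M"
  proof (rule eq_matI)
    fix x y assume "x < dim_row (E * M)" and "y < dim_col (E * M)"
    then have x: "x < Suc k" and y: "y < Suc k" using E M by auto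
    have "cs ! y \<in> set cs" using y len by (simp add: k_def)
    then have col: "cs ! y < dim_col A" using cs by auto
    have "(E * M) $$ (x, y) = (\<Sum>t<Suc k. E $$ (x, t) * M $$ (t, y))"
      using x y E M by (simp add: scalar_prod_def lessThan_atLeast0)
    also have "\<dots> = (\<Sum>t<Suc k. (if t = 0 then (if x = 0 then 1 / a else - A $$ (R ! x, j) / a) * M $$ (0, y) else 0)
          + (if t = x then (if x \<noteq> 0 then M $$ (x, y) else 0) else 0))"
      using x by (intro sum.cong) (auto simp: E_def algebra_simps)
    also have "\<dots> = (if x = 0 then 1 / a else - A $$ (R ! x, j) / a) * M $$ (0, y) + (if x \<noteq> 0 then M $$ (x, y) else 0)"
      using x by (simp add: sum.distrib)
    also have "\<dots> = N $$ (x, y)"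
      using x y R[OF x] col len i unfolding N_def M_def a_def
      by (auto simp: pivot_mat_index algebra_simps R_def k_def)
    finally show "N $$ (x, y) = (E * M) $$ (x, y)" by simp
  qed (use E M N in auto)
  moreover have "det E = 1 / a"
  proof -
    have "det E = prod_list (diag_mat E)"
      by (rule det_lower_triangular[OF _ E]) (auto simp: E_def)
    also have "\<dots> = (\<Prod>x<Suc k. E $$ (x, x))"
      by (simp add: prod_list_diag_prod lessThan_atLeast0 E_def)
    also have "\<dots> = 1 / a" by (subst prod.lessThan_Suc_shift) (simp add: E_def)
    finally show ?thesis .
  qed
  ultimately show ?thesis using det_mult[OF E M] by (simp add: N_def M_def R_def a_def)
qed

lemma det_submatrix_list_trim_eq_pivot_mat:
  fixes A :: "real mat"
  assumes i: "i < dim_row A" and j: "j < dim_col A" and pivot: "A $$ (i, j) \<noteq> 0"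
    and rs: "set rs \<subseteq> {0..<dim_row A - 1}" and cs: "set cs \<subseteq> {0..<dim_col A - 1}"
    and len: "length cs = length rs"
  shows "det (submatrix_list (trim_mat A i j) rs cs) =
    det (submatrix_list (pivot_mat A i j) (i # map (insert_index i) rs) (j # map (insert_index j) cs))"
proof -
  define k where "k = length rs"
  define R where "R = i # map (insert_index i) rs"
  define N where "N = submatrix_list (pivot_mat A i j) R (j # map (insert_index j) cs)"
  have R: "R ! r < dim_row A" "r \<noteq> 0 \<Longrightarrow> R ! r \<noteq> i" if "r < Suc k" for r
    using that i rs insert_index_less[of i "dim_row A"]
    by (auto simp: R_def k_def nth_Cons' subset_iff)
  have N: "N \<in> carrier_mat (Suc k) (Suc k)" unfolding N_def R_def k_def using len by auto
  have delete: "mat_delete N 0 0 = submatrix_list (trim_mat A i j) rs cs"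
    using rs cs len i j insert_index_less[of i "dim_row A"] insert_index_less[of j "dim_col A"]
    unfolding N_def mat_delete_def
    by (intro eq_matI) (auto simp: R_def trim_mat_index pivot_mat_index subset_iff)
  have col0: "N $$ (r, 0) = (if r = 0 then 1 else 0)" if "r < Suc k" for r
    using that R[OF that] j pivot by (auto simp: N_def pivot_mat_index R_def k_def)
  have "det N = (\<Sum>r<Suc k. N $$ (r, 0) * cofactor N r 0)"
    by (rule laplace_expansion_column[OF N]) simp
  also have "\<dots> = cofactor N 0 0"
    by (subst sum.lessThan_Suc_shift) (simp add: col0)
  finally have "det N = det (submatrix_list (trim_mat A i j) rs cs)" by (simp add: cofactor_def delete)
  then show ?thesis by (simp add: N_def R_def)
qed

lemma det_submatrix_list_trim:
  fixes A :: "real mat"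
  assumes i: "i < dim_row A" and j: "j < dim_col A" and pivot: "A $$ (i, j) \<noteq> 0"
    and rs: "set rs \<subseteq> {0..<dim_row A - 1}" and cs: "set cs \<subseteq> {0..<dim_col A - 1}"
    and len: "length cs = length rs"
  shows "det (submatrix_list (trim_mat A i j) rs cs) =
    det (submatrix_list A (i # map (insert_index i) rs) (j # map (insert_index j) cs)) / A $$ (i, j)"
proof -
  have "set (map (insert_index i) rs) \<subseteq> {0..<dim_row A} - {i}"
    using rs i insert_index_less[of i "dim_row A"] by auto
  moreover have "set (j # map (insert_index j) cs) \<subseteq> {0..<dim_col A}"
    using cs j insert_index_less[of j "dim_col A"] by auto
  ultimately show ?thesis
    using det_submatrix_list_trim_eq_pivot_mat[OF assms] len
    by (simp add: det_submatrix_list_pivot_mat[OF i])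
qed

lemma sum_trim_mat_column:
  fixes A :: "real mat"
  assumes i: "i < dim_row A" and q: "q < dim_col A - 1"
  shows "(\<Sum>r<dim_row A - 1. c r * trim_mat A i j $$ (r, q)) =
    (\<Sum>r<dim_row A - 1. c r * A $$ (insert_index i r, insert_index j q))
    - A $$ (i, insert_index j q) / A $$ (i, j) * (\<Sum>r<dim_row A - 1. c r * A $$ (insert_index i r, j))"
proof -
  have "(\<Sum>r<dim_row A - 1. c r * trim_mat A i j $$ (r, q)) =
    (\<Sum>r<dim_row A - 1. c r * A $$ (insert_index i r, insert_index j q)
      - A $$ (i, insert_index j q) / A $$ (i, j) * (c r * A $$ (insert_index i r, j)))"
    using i q by (intro sum.cong) (simp_all add: trim_mat_index algebra_simps)
  then show ?thesis by (simp add: sum_subtractf sum_distrib_left)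
qed

lemma lin_indep_rows_trim:
  fixes A :: "real mat"
  assumes li: "lin_indep_rows A" and i: "i < dim_row A" and j: "j < dim_col A"
    and pivot: "A $$ (i, j) \<noteq> 0"
  shows "lin_indep_rows (trim_mat A i j)"
  unfolding lin_indep_rows_def
proof (rule allI, rule impI)
  fix c :: "nat \<Rightarrow> real"
  let ?m = "dim_row A" and ?n = "dim_col A" and ?C = "trim_mat A i j"
  assume "\<forall>col<dim_col ?C. (\<Sum>r<dim_row ?C. c r * ?C $$ (r, col)) = 0"
  then have comb: "(\<Sum>r<?m - 1. c r * ?C $$ (r, col)) = 0" if "col < ?n - 1" for col
    using that by simp
  define s where "s = (\<Sum>r<?m - 1. c r * A $$ (insert_index i r, j))"
  \<comment> \<open>Row i gets the coefficient that cancels column j; on every other column the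
    combination reduces to the given one of the trim, by sum_trim_mat_column.\<close>
  define c' where "c' x = (if x = i then - s / A $$ (i, j) else c (delete_index i x))" for x
  have c'_insert: "c' (insert_index i r) = c r" for r by (simp add: c'_def)
  have "(\<Sum>x<?m. c' x * A $$ (x, col)) = 0" if col: "col < ?n" for col
  proof -
    have split: "(\<Sum>x<?m. c' x * A $$ (x, col)) =
        c' i * A $$ (i, col) + (\<Sum>r<?m - 1. c r * A $$ (insert_index i r, col))"
      using i by (simp add: sum_lessThan_insert_index c'_insert)
    show ?thesis
    proof (cases "col = j")
      case True
      show ?thesis unfolding split using True pivot by (simp add: c'_def s_def)
    next
      case False
      define col' where "col' = delete_index j col"
      have col': "col' < ?n - 1" "insert_index j col' = col"
        using False col j by (auto simp: col'_def delete_index_def insert_index_def)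
      show ?thesis
        unfolding split using sum_trim_mat_column[OF i col'(1), of c j] comb[OF col'(1)]
        by (simp add: col'(2) c'_def s_def algebra_simps)
    qed
  qed
  then have "\<forall>x<?m. c' x = 0" using li unfolding lin_indep_rows_def by blast
  then show "\<forall>r<dim_row ?C. c r = 0"
    using i insert_index_less[of i ?m] c'_insert by (metis dim_trim_mat(1))
qed

lemma totally_equimodular_trim:
  fixes A :: "real mat"
  assumes te: "totally_equimodular A" and li: "lin_indep_rows A"
    and i: "i < dim_row A" and j: "j < dim_col A" and pivot: "A $$ (i, j) \<noteq> 0"
  shows "totally_equimodular (trim_mat A i j)"
  unfolding totally_equimodular_def
proof (intro allI impI)
  let ?C = "trim_mat A i j"
  let ?lift = "\<lambda>rs cs. submatrix_list A (i # map (insert_index i) rs) (j # map (insert_index j) cs)"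
  fix R J1 J2
  assume R: "R \<subseteq> {0..<dim_row ?C}"
  assume "J1 \<subseteq> {0..<dim_col ?C} \<and> J2 \<subseteq> {0..<dim_col ?C} \<and> card J1 = card R \<and> card J2 = card R \<and>
       det (submatrix ?C R J1) \<noteq> 0 \<and> det (submatrix ?C R J2) \<noteq> 0"
  then have J: "J1 \<subseteq> {0..<dim_col ?C}" "J2 \<subseteq> {0..<dim_col ?C}" "card J1 = card R" "card J2 = card R"
    and nonzero: "det (submatrix ?C R J1) \<noteq> 0" "det (submatrix ?C R J2) \<noteq> 0"
    by auto
  define rs cs1 cs2 where "rs = sorted_list_of_set R"
    and "cs1 = sorted_list_of_set J1" and "cs2 = sorted_list_of_set J2"
  have fin: "finite R" "finite J1" "finite J2" using R J finite_subset by blast+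
  have lists: "distinct rs" "set rs \<subseteq> {0..<dim_row A - 1}"
      "distinct cs1" "set cs1 \<subseteq> {0..<dim_col A - 1}" "length cs1 = length rs"
      "distinct cs2" "set cs2 \<subseteq> {0..<dim_col A - 1}" "length cs2 = length rs"
    using R J fin by (auto simp: rs_def cs1_def cs2_def)
  have sub: "submatrix ?C R J1 = submatrix_list ?C rs cs1" "submatrix ?C R J2 = submatrix_list ?C rs cs2"
    using R J by (simp_all add: rs_def cs1_def cs2_def submatrix_eq_submatrix_list)
  have trim: "det (submatrix_list ?C rs cs1) = det (?lift rs cs1) / A $$ (i, j)"
      "det (submatrix_list ?C rs cs2) = det (?lift rs cs2) / A $$ (i, j)"
    using lists by (simp_all add: det_submatrix_list_trim[OF i j pivot])
  have "\<bar>det (?lift rs cs1)\<bar> = \<bar>det (?lift rs cs2)\<bar>"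
  proof (rule abs_det_submatrix_list_totally_equimodular[OF te li])
    show "distinct (i # map (insert_index i) rs)" "set (i # map (insert_index i) rs) \<subseteq> {0..<dim_row A}"
      using insert_index_list[OF lists(1,2) i] .
    show "distinct (j # map (insert_index j) cs1)" "set (j # map (insert_index j) cs1) \<subseteq> {0..<dim_col A}"
      using insert_index_list[OF lists(3,4) j] .
    show "distinct (j # map (insert_index j) cs2)" "set (j # map (insert_index j) cs2) \<subseteq> {0..<dim_col A}"
      using insert_index_list[OF lists(6,7) j] .
    show "det (?lift rs cs1) \<noteq> 0" "det (?lift rs cs2) \<noteq> 0"
      using nonzero sub trim by auto
  qed (use lists in simp_all)
  then show "\<bar>det (submatrix ?C R J1)\<bar> = \<bar>det (submatrix ?C R J2)\<bar>"
    using sub trim by (simp add: abs_div)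
qed

lemma totally_unimodular_rows_of_trim:
  fixes A :: "real mat"
  assumes i: "i < dim_row A" and j: "j < dim_col A" and unit: "\<bar>A $$ (i, j)\<bar> = 1"
    and R: "R \<subseteq> {0..<dim_row A - 1}"
    and tu: "totally_unimodular (rows_of A (insert i (insert_index i ` R)))"
  shows "totally_unimodular (rows_of (trim_mat A i j) R)"
  unfolding totally_unimodular_def
proof (intro allI impI)
  let ?C = "trim_mat A i j" and ?R' = "insert i (insert_index i ` R)"
  fix I J
  assume "I \<subseteq> {0..<dim_row (rows_of ?C R)} \<and> J \<subseteq> {0..<dim_col (rows_of ?C R)} \<and> card I = card J"
  then have I: "I \<subseteq> {0..<card R}" and J: "J \<subseteq> {0..<dim_col A - 1}" and card: "card I = card J"
    using R by (auto simp: rows_of_eq_submatrix_list)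
  have fin: "finite R" "finite I" "finite J" using R I J finite_subset by blast+
  define P where "P = sorted_list_of_set R"
  define rs cs where "rs = map ((!) P) (sorted_list_of_set I)" and "cs = sorted_list_of_set J"
  have P: "distinct P" "set P = R" "length P = card R" using fin by (simp_all add: P_def)
  have "submatrix (rows_of ?C R) I J = submatrix_list (submatrix_list ?C P [0..<dim_col A - 1]) (sorted_list_of_set I) cs"
    using R I J by (simp add: rows_of_eq_submatrix_list submatrix_eq_submatrix_list P_def cs_def)
  also have "\<dots> = submatrix_list ?C rs (map ((!) [0..<dim_col A - 1]) cs)"
    using I J fin P by (subst submatrix_list_submatrix_list) (auto simp: rs_def cs_def subset_iff)
  also have "map ((!) [0..<dim_col A - 1]) cs = cs"
    using J fin by (auto simp: cs_def subset_iff intro!: map_idI)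
  finally have sub: "submatrix (rows_of ?C R) I J = submatrix_list ?C rs cs" .
  have lists: "distinct rs" "set rs \<subseteq> R" "distinct cs" "set cs \<subseteq> {0..<dim_col A - 1}"
      "length cs = length rs"
    using I J fin P card by (auto simp: rs_def cs_def distinct_map inj_on_nth subset_iff)
  then have rows: "set rs \<subseteq> {0..<dim_row A - 1}" using R by blast
  have "det (submatrix_list A (i # map (insert_index i) rs) (j # map (insert_index j) cs)) \<in> {-1, 0, 1}"
  proof (rule det_submatrix_list_rows_of_totally_unimodular[OF tu])
    show "?R' \<subseteq> {0..<dim_row A}" using i R insert_index_less[of i "dim_row A"] by auto
    show "distinct (i # map (insert_index i) rs)" using insert_index_list(1)[OF lists(1) rows i] .
    show "distinct (j # map (insert_index j) cs)" "set (j # map (insert_index j) cs) \<subseteq> {0..<dim_col A}"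
      using insert_index_list[OF lists(3,4) j] by simp_all
  qed (use lists in auto)
  then show "det (submatrix (rows_of ?C R) I J) \<in> {-1, 0, 1}"
    using det_submatrix_list_trim[OF i j _ rows lists(4,5)] unit
    by (auto simp: sub abs_if split: if_splits)
qed

lemma zero_pm_one_if_totally_unimodular:
  fixes M :: "real mat"
  assumes "totally_unimodular M"
  shows "zero_pm_one M"
  unfolding zero_pm_one_def
proof (intro allI impI)
  fix r c assume r: "r < dim_row M" and c: "c < dim_col M"
  have "M $$ (r, c) = det (submatrix_list M [r] [c])"
    by (subst det_single) auto
  also have "\<dots> \<in> {-1, 0, 1}"
    using r c by (intro det_submatrix_list_totally_unimodular[OF assms]) auto
  finally show "M $$ (r, c) \<in> {-1, 0, 1}" .
qed

lemma zero_pm_one_if_proper_rows_tu_set: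
  fixes M :: "real mat"
  assumes proper: "\<And>R. R \<subset> {0..<dim_row M} \<Longrightarrow> tu_set (rows_of M R)" and two: "dim_row M \<ge> 2"
  shows "zero_pm_one M"
  unfolding zero_pm_one_def
proof (intro allI impI)
  fix r c assume r: "r < dim_row M" and c: "c < dim_col M"
  have "{r} \<subset> {0..<dim_row M}"
  proof (rule psubsetI)
    show "{r} \<subseteq> {0..<dim_row M}" using r by simp
    have "(if r = 0 then 1 else 0) \<in> {0..<dim_row M} - {r}" using two by auto
    then show "{r} \<noteq> {0..<dim_row M}" by blast
  qed
  then have "zero_pm_one (rows_of M {r})" using proper by (simp add: tu_set_def)
  moreover have "rows_of M {r} = submatrix_list M [r] [0..<dim_col M]"
    using r by (simp add: rows_of_eq_submatrix_list)
  ultimately show "M $$ (r, c) \<in> {-1, 0, 1}"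
    using c unfolding zero_pm_one_def by fastforce
qed

lemma tu_set_rows_of_trim:
  fixes A :: "real mat"
  assumes li: "lin_indep_rows A" and proper: "\<And>R. R \<subset> {0..<dim_row A} \<Longrightarrow> tu_set (rows_of A R)"
    and i: "i < dim_row A" and j: "j < dim_col A" and unit: "\<bar>A $$ (i, j)\<bar> = 1"
    and R: "R \<subset> {0..<dim_row A - 1}"
  shows "tu_set (rows_of (trim_mat A i j) R)"
proof -
  obtain r where r: "r < dim_row A - 1" "r \<notin> R"
    using R by (metis atLeastLessThan_iff psubset_imp_ex_mem DiffE)
  have "insert i (insert_index i ` R) \<subseteq> {0..<dim_row A}"
    using R i insert_index_less[of i "dim_row A"] by auto
  moreover have "insert_index i r \<notin> insert i (insert_index i ` R)"
    using r(2) inj_image_mem_iff[OF insert_index_inj_on[of i UNIV]] by simp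
  moreover have "insert_index i r \<in> {0..<dim_row A}" using r i insert_index_less by simp
  ultimately have "insert i (insert_index i ` R) \<subset> {0..<dim_row A}" by blast
  then have "tu_set (rows_of A (insert i (insert_index i ` R)))" by (rule proper)
  then have "totally_unimodular (rows_of (trim_mat A i j) R)"
    using R by (intro totally_unimodular_rows_of_trim[OF i j unit]) (simp_all add: tu_set_def)
  moreover have "lin_indep_rows (trim_mat A i j)"
    using unit by (intro lin_indep_rows_trim[OF li i j]) auto
  then have "lin_indep_rows (rows_of (trim_mat A i j) R)"
    using R by (intro lin_indep_rows_rows_of) auto
  ultimately show ?thesis by (simp add: tu_set_def zero_pm_one_if_totally_unimodular)
qed

lemma exists_full_minor_not_unimodular:
  fixes A :: "real mat"
  assumes not_tu: "\<not> totally_unimodular A"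
    and proper: "\<And>R. R \<subset> {0..<dim_row A} \<Longrightarrow> totally_unimodular (rows_of A R)"
  obtains cs where "distinct cs" "set cs \<subseteq> {0..<dim_col A}" "length cs = dim_row A"
    "det (submatrix_list A [0..<dim_row A] cs) \<notin> {-1, 0, 1}"
proof -
  obtain I J where I: "I \<subseteq> {0..<dim_row A}" and J: "J \<subseteq> {0..<dim_col A}" and card: "card I = card J"
    and large: "det (submatrix A I J) \<notin> {-1, 0, 1}"
    using not_tu unfolding totally_unimodular_def by blast
  have fin: "finite I" "finite J" using I J finite_subset by blast+
  have sub: "submatrix A I J = submatrix_list A (sorted_list_of_set I) (sorted_list_of_set J)"
    using I J by (rule submatrix_eq_submatrix_list)
  have "I = {0..<dim_row A}"
  proof (rule ccontr)
    assume "I \<noteq> {0..<dim_row A}"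
    with I have tu: "totally_unimodular (rows_of A I)" by (intro proper) (rule psubsetI)
    have "det (submatrix_list A (sorted_list_of_set I) (sorted_list_of_set J)) \<in> {-1, 0, 1}"
      using J fin card by (intro det_submatrix_list_rows_of_totally_unimodular[OF tu I]) auto
    then show False using large sub by simp
  qed
  then show ?thesis
    using that[of "sorted_list_of_set J"] J fin card large sub by simp
qed

lemma exists_full_minor_not_unimodular_through_column:
  fixes A :: "real mat"
  assumes te: "totally_equimodular A" and li: "lin_indep_rows A"
    and not_tu: "\<not> totally_unimodular A"
    and proper: "\<And>R. R \<subset> {0..<dim_row A} \<Longrightarrow> totally_unimodular (rows_of A R)"
    and i: "i < dim_row A" and j: "j < dim_col A" and pivot: "A $$ (i, j) \<noteq> 0"
  obtains cs where "distinct cs" "set cs \<subseteq> {0..<dim_col A}" "length cs = dim_row A" "j \<in> set cs"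
    "det (submatrix_list A [0..<dim_row A] cs) \<notin> {-1, 0, 1}"
proof -
  let ?rs = "[0..<dim_row A]"
  obtain cs where cs: "distinct cs" "set cs \<subseteq> {0..<dim_col A}" "length cs = dim_row A"
    and large: "det (submatrix_list A ?rs cs) \<notin> {-1, 0, 1}"
    using exists_full_minor_not_unimodular[OF not_tu proper] by blast
  show ?thesis
  proof (cases "j \<in> set cs")
    case True
    show ?thesis by (rule that[OF cs True large])
  next
    case False
    have nonsingular: "det (submatrix_list A ?rs cs) \<noteq> 0" using large by blast
    then have "\<exists>t < length ?rs. det (submatrix_list A ?rs (cs[t := j])) \<noteq> 0"
      using exists_column_exchange_nonsingular[OF nonsingular, where q = i and j = j] cs(3) i pivot
      by simp
    then obtain t where t: "t < dim_row A" and nonzero: "det (submatrix_list A ?rs (cs[t := j])) \<noteq> 0"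
      by auto
    have cs': "distinct (cs[t := j])" "set (cs[t := j]) \<subseteq> {0..<dim_col A}"
      "length (cs[t := j]) = dim_row A" "j \<in> set (cs[t := j])"
    proof -
      show "distinct (cs[t := j])" using cs(1) False by (intro distinct_list_update) auto
      show "set (cs[t := j]) \<subseteq> {0..<dim_col A}"
        using cs(2) j set_update_subset_insert[of cs t j] by auto
      show "length (cs[t := j]) = dim_row A" using cs(3) by simp
      show "j \<in> set (cs[t := j])" using cs(3) t by (simp add: set_update_memI)
    qed
    have "\<bar>det (submatrix_list A ?rs (cs[t := j]))\<bar> = \<bar>det (submatrix_list A ?rs cs)\<bar>"
      by (rule abs_det_submatrix_list_totally_equimodular[OF te li])
        (use cs cs' nonzero nonsingular in simp_all)
    then have "det (submatrix_list A ?rs (cs[t := j])) \<notin> {-1, 0, 1}"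
      using large by (auto simp: abs_if split: if_splits)
    then show ?thesis by (rule that[OF cs'])
  qed
qed

lemma not_totally_unimodular_trim:
  fixes A :: "real mat"
  assumes i: "i < dim_row A" and j: "j < dim_col A" and unit: "\<bar>A $$ (i, j)\<bar> = 1"
    and cs: "distinct cs" "set cs \<subseteq> {0..<dim_col A}" "length cs = dim_row A" "j \<in> set cs"
    and large: "det (submatrix_list A [0..<dim_row A] cs) \<notin> {-1, 0, 1}"
  shows "\<not> totally_unimodular (trim_mat A i j)"
proof
  assume tu: "totally_unimodular (trim_mat A i j)"
  let ?m = "dim_row A" and ?n = "dim_col A"
  define cs' where "cs' = map (delete_index j) (remove1 j cs)"
  have lift: "map (insert_index j) cs' = remove1 j cs"
    using cs(1) by (auto simp: cs'_def insert_delete_index intro!: map_idI)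
  have cs': "distinct cs'" "set cs' \<subseteq> {0..<?n - 1}" "length cs' = ?m - 1"
  proof -
    show "distinct cs'"
      using cs(1) lift by (metis distinct_map distinct_remove1)
    show "set cs' \<subseteq> {0..<?n - 1}"
      using cs(1,2) j by (auto simp: cs'_def delete_index_def)
    show "length cs' = ?m - 1" using cs by (simp add: cs'_def length_remove1)
  qed
  have rows: "set (i # map (insert_index i) [0..<?m - 1]) = set [0..<?m]"
    using insert_index_image[of i "?m - 1"] i by auto
  have "\<bar>det (submatrix_list (trim_mat A i j) [0..<?m - 1] cs')\<bar> =
      \<bar>det (submatrix_list A (i # map (insert_index i) [0..<?m - 1]) (j # remove1 j cs))\<bar>"
    using det_submatrix_list_trim[OF i j _ _ cs'(2)] cs' unit lift by (simp add: abs_div)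
  also have "\<dots> = \<bar>det (submatrix_list A [0..<?m] cs)\<bar>"
    using insert_index_list(1)[of "[0..<?m - 1]" ?m i] i cs rows
    by (intro abs_det_submatrix_list_permute) (auto simp: length_remove1)
  finally have "det (submatrix_list (trim_mat A i j) [0..<?m - 1] cs') \<notin> {-1, 0, 1}"
    using large by (auto simp: abs_if split: if_splits)
  moreover have "det (submatrix_list (trim_mat A i j) [0..<?m - 1] cs') \<in> {-1, 0, 1}"
    using cs' by (intro det_submatrix_list_totally_unimodular[OF tu]) auto
  ultimately show False by contradiction
qed

theorem mainTheorem6:
  fixes A :: "real mat" and i j :: nat
  assumes "te_lace A"
    and "dim_row A \<ge> 3"
    and "i < dim_row A" and "j < dim_col A"
    and "A $$ (i,j) \<noteq> 0"
  shows "te_lace (trim_mat A i j)"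
proof -
  let ?C = "trim_mat A i j"
  have zero_pm_one: "zero_pm_one A" and li: "lin_indep_rows A" and te: "totally_equimodular A"
    and not_tu: "\<not> totally_unimodular A"
    and proper: "\<And>R. R \<subset> {0..<dim_row A} \<Longrightarrow> tu_set (rows_of A R)"
    using assms(1) unfolding te_lace_def te_set_def tu_set_def by blast+
  have "A $$ (i, j) \<in> {-1, 0, 1}" using zero_pm_one assms(3,4) unfolding zero_pm_one_def by blast
  then have unit: "\<bar>A $$ (i, j)\<bar> = 1" using assms(5) by auto
  have proper_C: "tu_set (rows_of ?C R)" if "R \<subset> {0..<dim_row ?C}" for R
    using tu_set_rows_of_trim[OF li proper assms(3,4) unit] that by simp
  have "zero_pm_one ?C"
    using proper_C assms(2) by (intro zero_pm_one_if_proper_rows_tu_set) auto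
  moreover have "\<not> totally_unimodular ?C"
  proof -
    have proper_tu: "totally_unimodular (rows_of A R)" if "R \<subset> {0..<dim_row A}" for R
      using proper[OF that] by (simp add: tu_set_def)
    obtain cs where "distinct cs" "set cs \<subseteq> {0..<dim_col A}" "length cs = dim_row A"
      "j \<in> set cs" "det (submatrix_list A [0..<dim_row A] cs) \<notin> {-1, 0, 1}"
      by (rule exists_full_minor_not_unimodular_through_column[OF te li not_tu proper_tu assms(3-5)])
    then show ?thesis by (rule not_totally_unimodular_trim[OF assms(3,4) unit])
  qed
  ultimately show ?thesis
    using proper_C lin_indep_rows_trim[OF li assms(3-5)] totally_equimodular_trim[OF te li assms(3-5)]
    by (simp add: te_lace_def te_set_def tu_set_def)
qed

end
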